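(* Let $\phi$ be an IPC formula disjunctive in the variable $x$. Then for every Heyting algebra $H$ and every valuation $v$ in $H$ of the variables of $\phi$ other than $x$, the monotone map $h\mapsto[\![\phi]\!]_{(v,h/x)}$ has a least fixed point, equal to the value under $v$ of $\big(\bigwedge_{\alpha\in\mathrm{Head}(\phi)}\alpha\big)\to\big(\bigvee_{\beta\in\mathrm{Side}(\phi)}\beta\big)$ (empty meet $=\top$, empty join $=\bot$).
   Context: A formula is disjunctive in $x$ if it is generated by the grammar $\phi ::= x \mid \alpha\to\phi \mid \beta\vee\phi \mid \phi\vee\phi$, where $\alpha,\beta$ range over IPC formulas not containing $x$ (disjunctions up to commutativity). $\mathrm{Head}(\phi)$ is the set of formulas $\alpha$ used in productions $\alpha\to\phi'$ in the parse of $\phi$; $\mathrm{Side}(\phi)$ is the set of formulas $\beta$ used in productions $\beta\vee\phi'$. $(v,h/x)$ extends $v$ by sending $x$ to $h$. *)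

theory Defs
  imports Main
begin

class heyting_algebra = bounded_lattice +
  fixes himp :: "'a \<Rightarrow> 'a \<Rightarrow> 'a"
  assumes himp_adj: "inf z x \<le> y \<longleftrightarrow> z \<le> himp x y"

datatype 'v fm =
    Var 'v
  | Bot
  | Top
  | Conj "'v fm" "'v fm"
  | Disj "'v fm" "'v fm"
  | Imp "'v fm" "'v fm"

primrec vars :: "'v fm \<Rightarrow> 'v set" where
  "vars (Var y) = {y}"
| "vars Bot = {}"
| "vars Top = {}"
| "vars (Conj a b) = vars a \<union> vars b"
| "vars (Disj a b) = vars a \<union> vars b"
| "vars (Imp a b) = vars a \<union> vars b"

primrec eval :: "('v \<Rightarrow> 'h::heyting_algebra) \<Rightarrow> 'v fm \<Rightarrow> 'h" where
  "eval v (Var y) = v y"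
| "eval v Bot = bot"
| "eval v Top = top"
| "eval v (Conj a b) = inf (eval v a) (eval v b)"
| "eval v (Disj a b) = sup (eval v a) (eval v b)"
| "eval v (Imp a b) = himp (eval v a) (eval v b)"

definition BigConj :: "'v fm list \<Rightarrow> 'v fm" where
  "BigConj as = foldr Conj as Top"

definition BigDisj :: "'v fm list \<Rightarrow> 'v fm" where
  "BigDisj bs = foldr Disj bs Bot"

text \<open>Parse trees of the grammar
  phi ::= x | alpha -> phi | beta \/ phi | phi \/ phi,
  with side disjunctions allowed in either order (disjunction up to commutativity).\<close>

datatype 'v dparse =
    DX
  | DImp "'v fm" "'v dparse"
  | DSideL "'v fm" "'v dparse"
  | DSideR "'v dparse" "'v fm"
  | DOr "'v dparse" "'v dparse"

primrec to_fm :: "'v \<Rightarrow> 'v dparse \<Rightarrow> 'v fm" where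
  "to_fm x DX = Var x"
| "to_fm x (DImp a p) = Imp a (to_fm x p)"
| "to_fm x (DSideL b p) = Disj b (to_fm x p)"
| "to_fm x (DSideR p b) = Disj (to_fm x p) b"
| "to_fm x (DOr p q) = Disj (to_fm x p) (to_fm x q)"

primrec wf_dparse :: "'v \<Rightarrow> 'v dparse \<Rightarrow> bool" where
  "wf_dparse x DX = True"
| "wf_dparse x (DImp a p) = (x \<notin> vars a \<and> wf_dparse x p)"
| "wf_dparse x (DSideL b p) = (x \<notin> vars b \<and> wf_dparse x p)"
| "wf_dparse x (DSideR p b) = (x \<notin> vars b \<and> wf_dparse x p)"
| "wf_dparse x (DOr p q) = (wf_dparse x p \<and> wf_dparse x q)"

definition disjunctive_in :: "'v \<Rightarrow> 'v fm \<Rightarrow> 'v dparse \<Rightarrow> bool" where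
  "disjunctive_in x \<phi> p \<longleftrightarrow> wf_dparse x p \<and> to_fm x p = \<phi>"

primrec head_list :: "'v dparse \<Rightarrow> 'v fm list" where
  "head_list DX = []"
| "head_list (DImp a p) = a # head_list p"
| "head_list (DSideL b p) = head_list p"
| "head_list (DSideR p b) = head_list p"
| "head_list (DOr p q) = head_list p @ head_list q"

primrec side_list :: "'v dparse \<Rightarrow> 'v fm list" where
  "side_list DX = []"
| "side_list (DImp a p) = side_list p"
| "side_list (DSideL b p) = b # side_list p"
| "side_list (DSideR p b) = b # side_list p"
| "side_list (DOr p q) = side_list p @ side_list q"

definition Head :: "'v dparse \<Rightarrow> 'v fm set" where
  "Head p = set (head_list p)"

definition Side :: "'v dparse \<Rightarrow> 'v fm set" where
  "Side p = set (side_list p)"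

end

theory Submission
  imports Defs
begin

text \<open>Write \<open>A\<close> for the meet of the heads and \<open>B\<close> for the join of the sides. By induction on
  the parse, the map \<open>F h = [[\<phi>]](v,h/x)\<close> is monotone, satisfies
  \<open>B \<squnion> h \<le> F h \<le> A \<rightarrow> (B \<squnion> h)\<close>, and every prefixed point \<open>q\<close> of \<open>F\<close> satisfies
  \<open>A \<rightarrow> q \<le> q\<close>. The two bounds make \<open>A \<rightarrow> B\<close> a fixed point; conversely a fixed point \<open>q\<close>
  lies above \<open>B\<close> and above \<open>A \<rightarrow> q\<close>, hence above \<open>A \<rightarrow> B\<close>.\<close>

context heyting_algebra
begin

lemma inf_himp_le: "inf x (himp x y) \<le> y"
  using himp_adj[of "himp x y" x y] by (simp add: inf_commute)

lemma le_himp: "y \<le> himp x y"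
  using himp_adj[of y x y] by simp

lemma himp_mono: "x' \<le> x \<Longrightarrow> y \<le> y' \<Longrightarrow> himp x y \<le> himp x' y'"
proof -
  assume "x' \<le> x" and "y \<le> y'"
  then have "inf (himp x y) x' \<le> inf x (himp x y)"
    by (metis inf_commute inf_mono order.refl)
  also have "\<dots> \<le> y'"
    using inf_himp_le \<open>y \<le> y'\<close> by (rule order_trans)
  finally show ?thesis
    using himp_adj by blast
qed

lemma himp_top_le: "himp top y \<le> y"
  using inf_himp_le[of top y] by simp

lemma le_himp_inf_iff: "z \<le> himp (inf a b) c \<longleftrightarrow> z \<le> himp a (himp b c)"
  by (simp flip: himp_adj add: inf_assoc)

lemma himp_curry: "himp (inf a b) c = himp a (himp b c)"
  using le_himp_inf_iff order.refl by (blast intro: order.antisym)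

end

lemma eval_fun_upd_notin: "x \<notin> vars a \<Longrightarrow> eval (v(x := h)) a = eval v a"
  by (induction a) auto

lemma eval_BigConj_append:
  "eval v (BigConj (as @ bs)) = inf (eval v (BigConj as)) (eval v (BigConj bs))"
  by (induction as) (auto simp: BigConj_def inf_assoc)

lemma eval_BigDisj_append:
  "eval v (BigDisj (as @ bs)) = sup (eval v (BigDisj as)) (eval v (BigDisj bs))"
  by (induction as) (auto simp: BigDisj_def sup_assoc)

lemma eval_BigConj_Cons: "eval v (BigConj (a # as)) = inf (eval v a) (eval v (BigConj as))"
  by (simp add: BigConj_def)

lemma eval_BigDisj_Cons: "eval v (BigDisj (b # bs)) = sup (eval v b) (eval v (BigDisj bs))"
  by (simp add: BigDisj_def)

definition disjunctive_map :: "'h::heyting_algebra \<Rightarrow> 'h \<Rightarrow> ('h \<Rightarrow> 'h) \<Rightarrow> bool" where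
  "disjunctive_map A B F \<longleftrightarrow> mono F
     \<and> (\<forall>h. sup B h \<le> F h \<and> F h \<le> himp A (sup B h))
     \<and> (\<forall>q. F q \<le> q \<longrightarrow> himp A q \<le> q)"

lemma disjunctive_mapI:
  assumes "mono F" and "\<And>h. sup B h \<le> F h" and "\<And>h. F h \<le> himp A (sup B h)"
    and "\<And>q. F q \<le> q \<Longrightarrow> himp A q \<le> q"
  shows "disjunctive_map A B F"
  using assms unfolding disjunctive_map_def by blast

lemma disjunctive_mapD:
  assumes "disjunctive_map A B F"
  shows "mono F" and "sup B h \<le> F h" and "F h \<le> himp A (sup B h)"
    and "F q \<le> q \<Longrightarrow> himp A q \<le> q"
  using assms unfolding disjunctive_map_def by blast+

lemma disjunctive_map_id: "disjunctive_map top bot (\<lambda>h. h)"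
  by (rule disjunctive_mapI) (simp_all add: mono_def le_himp himp_top_le)

lemma disjunctive_map_himp:
  assumes F: "disjunctive_map A B F"
  shows "disjunctive_map (inf a A) B (\<lambda>h. himp a (F h))"
proof (rule disjunctive_mapI)
  show "mono (\<lambda>h. himp a (F h))"
    using disjunctive_mapD(1)[OF F] by (simp add: mono_def himp_mono)
  show "sup B h \<le> himp a (F h)" for h
    using disjunctive_mapD(2)[OF F, of h] le_himp[of "F h" a] by (rule order_trans)
  show "himp a (F h) \<le> himp (inf a A) (sup B h)" for h
    using himp_mono[OF order.refl disjunctive_mapD(3)[OF F]] by (simp add: himp_curry)
next
  fix q
  assume prefixed: "himp a (F q) \<le> q"
  have mono_F: "mono F"
    using F by (rule disjunctive_mapD(1))
  \<comment> \<open>The hypothesis on \<open>F\<close> is used at the prefixed point \<open>F q\<close> of \<open>F\<close>, not at \<open>q\<close>.\<close>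
  define q' where "q' = F q"
  have "F q' \<le> F (himp a q')"
    using mono_F le_himp by (rule monoD)
  also have "\<dots> \<le> q'"
    unfolding q'_def using mono_F prefixed by (rule monoD)
  finally have "himp A q' \<le> q'"
    by (rule disjunctive_mapD(4)[OF F])
  have "q \<le> q'"
    unfolding q'_def using sup_ge2 disjunctive_mapD(2)[OF F] by (rule order_trans)
  have "himp (inf a A) q = himp a (himp A q)"
    by (rule himp_curry)
  also have "\<dots> \<le> himp a (himp A q')"
    using himp_mono[OF order.refl \<open>q \<le> q'\<close>] by (rule himp_mono[OF order.refl])
  also have "\<dots> \<le> himp a q'"
    using \<open>himp A q' \<le> q'\<close> by (rule himp_mono[OF order.refl])
  also have "\<dots> \<le> q"
    using prefixed by (simp add: q'_def)
  finally show "himp (inf a A) q \<le> q" .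
qed

lemma disjunctive_map_sup_left:
  assumes F: "disjunctive_map A B F"
  shows "disjunctive_map A (sup b B) (\<lambda>h. sup b (F h))"
proof (rule disjunctive_mapI)
  show "mono (\<lambda>h. sup b (F h))"
    using disjunctive_mapD(1)[OF F] by (simp add: mono_def le_supI2)
  show "sup (sup b B) h \<le> sup b (F h)" for h
    using disjunctive_mapD(2)[OF F, of h] by (simp add: sup_assoc le_supI2)
  show "sup b (F h) \<le> himp A (sup (sup b B) h)" for h
  proof (rule sup_least)
    show "b \<le> himp A (sup (sup b B) h)"
      by (rule order_trans[OF _ le_himp]) (intro le_supI1 sup_ge1)
    have "sup B h \<le> sup (sup b B) h"
      by (simp add: le_supI2 sup_assoc)
    then show "F h \<le> himp A (sup (sup b B) h)"
      using disjunctive_mapD(3)[OF F, of h] himp_mono[OF order.refl] order_trans by blast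
  qed
  show "sup b (F q) \<le> q \<Longrightarrow> himp A q \<le> q" for q
    using disjunctive_mapD(4)[OF F] by simp
qed

lemma disjunctive_map_sup_right:
  assumes "disjunctive_map A B F"
  shows "disjunctive_map A (sup b B) (\<lambda>h. sup (F h) b)"
  using disjunctive_map_sup_left[OF assms, of b] by (simp add: sup_commute)

lemma disjunctive_map_sup:
  assumes F: "disjunctive_map A1 B1 F" and G: "disjunctive_map A2 B2 G"
  shows "disjunctive_map (inf A1 A2) (sup B1 B2) (\<lambda>h. sup (F h) (G h))"
proof (rule disjunctive_mapI)
  show "mono (\<lambda>h. sup (F h) (G h))"
  proof (rule monoI)
    fix h h' :: 'a
    assume "h \<le> h'"
    with disjunctive_mapD(1)[OF F] disjunctive_mapD(1)[OF G]
    show "sup (F h) (G h) \<le> sup (F h') (G h')"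
      by (blast intro: sup_mono dest: monoD)
  qed
  show "sup (sup B1 B2) h \<le> sup (F h) (G h)" for h
    using disjunctive_mapD(2)[OF F, of h] disjunctive_mapD(2)[OF G, of h]
    by (simp add: le_supI1 le_supI2)
  show "sup (F h) (G h) \<le> himp (inf A1 A2) (sup (sup B1 B2) h)" for h
  proof (rule sup_least)
    have "himp A1 (sup B1 h) \<le> himp (inf A1 A2) (sup (sup B1 B2) h)"
      by (rule himp_mono) (simp_all add: le_supI1)
    then show "F h \<le> himp (inf A1 A2) (sup (sup B1 B2) h)"
      using disjunctive_mapD(3)[OF F, of h] by (rule order_trans[rotated])
    have "himp A2 (sup B2 h) \<le> himp (inf A1 A2) (sup (sup B1 B2) h)"
      by (rule himp_mono) (simp_all add: le_supI1)
    then show "G h \<le> himp (inf A1 A2) (sup (sup B1 B2) h)"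
      using disjunctive_mapD(3)[OF G, of h] by (rule order_trans[rotated])
  qed
next
  fix q
  assume "sup (F q) (G q) \<le> q"
  then have "himp A1 q \<le> q" and "himp A2 q \<le> q"
    using disjunctive_mapD(4)[OF F] disjunctive_mapD(4)[OF G] by simp_all
  have "himp (inf A1 A2) q = himp A1 (himp A2 q)"
    by (rule himp_curry)
  also have "\<dots> \<le> himp A1 q"
    using \<open>himp A2 q \<le> q\<close> by (rule himp_mono[OF order.refl])
  also have "\<dots> \<le> q"
    by fact
  finally show "himp (inf A1 A2) q \<le> q" .
qed

lemma disjunctive_map_least_fixpoint:
  assumes F: "disjunctive_map A B F"
  shows "F (himp A B) = himp A B" and "F q = q \<Longrightarrow> himp A B \<le> q"
proof -
  have "sup B (himp A B) = himp A B"
    using le_himp by (rule sup_absorb2)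
  then have "F (himp A B) \<le> himp A (himp A B)"
    using disjunctive_mapD(3)[OF F, of "himp A B"] by simp
  also have "\<dots> = himp A B"
    using himp_curry[of A A B] by simp
  finally show "F (himp A B) = himp A B"
    using disjunctive_mapD(2)[OF F, of "himp A B"] by (simp add: order.antisym)
next
  assume "F q = q"
  then have "B \<le> q" and "himp A q \<le> q"
    using disjunctive_mapD(2,4)[OF F, of q] by simp_all
  have "himp A B \<le> himp A q"
    using \<open>B \<le> q\<close> by (rule himp_mono[OF order.refl])
  also have "\<dots> \<le> q"
    by fact
  finally show "himp A B \<le> q" .
qed

lemma disjunctive_map_eval:
  fixes v :: "'v \<Rightarrow> 'h::heyting_algebra"
  assumes "wf_dparse x p"
  shows "disjunctive_map (eval v (BigConj (head_list p))) (eval v (BigDisj (side_list p)))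
           (\<lambda>h. eval (v(x := h)) (to_fm x p))"
  using assms
proof (induction p)
  case DX
  show ?case
    using disjunctive_map_id by (simp add: BigConj_def BigDisj_def)
next
  case (DImp a p)
  then have "wf_dparse x p" and "\<And>h. eval (v(x := h)) a = eval v a"
    by (simp_all add: eval_fun_upd_notin)
  with disjunctive_map_himp[OF DImp.IH, of "eval v a"] show ?case
    by (simp only: to_fm.simps eval.simps head_list.simps side_list.simps eval_BigConj_Cons)
next
  case (DSideL b p)
  then have "wf_dparse x p" and "\<And>h. eval (v(x := h)) b = eval v b"
    by (simp_all add: eval_fun_upd_notin)
  with disjunctive_map_sup_left[OF DSideL.IH, of "eval v b"] show ?case
    by (simp only: to_fm.simps eval.simps head_list.simps side_list.simps eval_BigDisj_Cons)
next
  case (DSideR p b)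
  then have "wf_dparse x p" and "\<And>h. eval (v(x := h)) b = eval v b"
    by (simp_all add: eval_fun_upd_notin)
  with disjunctive_map_sup_right[OF DSideR.IH, of "eval v b"] show ?case
    by (simp only: to_fm.simps eval.simps head_list.simps side_list.simps eval_BigDisj_Cons)
next
  case (DOr p q)
  then show ?case
    using disjunctive_map_sup[OF DOr.IH] by (simp add: eval_BigConj_append eval_BigDisj_append)
qed

theorem mainTheorem12:
  fixes x :: 'v and \<phi> :: "'v fm" and p :: "'v dparse"
    and v :: "'v \<Rightarrow> 'h::heyting_algebra"
  assumes "disjunctive_in x \<phi> p"
  defines "f \<equiv> (\<lambda>h. eval (v(x := h)) \<phi>)"
  shows "mono f
    \<and> f (eval v (Imp (BigConj (head_list p)) (BigDisj (side_list p))))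
        = eval v (Imp (BigConj (head_list p)) (BigDisj (side_list p)))
    \<and> (\<forall>q. f q = q \<longrightarrow>
          eval v (Imp (BigConj (head_list p)) (BigDisj (side_list p))) \<le> q)"
proof -
  have "wf_dparse x p" and "\<phi> = to_fm x p"
    using assms(1) by (auto simp: disjunctive_in_def)
  then have "disjunctive_map (eval v (BigConj (head_list p))) (eval v (BigDisj (side_list p))) f"
    unfolding f_def by (simp add: disjunctive_map_eval)
  then show ?thesis
    using disjunctive_mapD(1) disjunctive_map_least_fixpoint by auto
qed

end
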